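(* Let $S:\mathbb{R}^m\times\mathbb{R}^n\to\mathbb{R}^q$ be bilinear with lifted operator $\mathscr{S}$, let $\mathcal{K}'\subseteq\mathbb{R}^{m\times n}$, $\mathcal{M}=\mathcal{K}'-\mathcal{K}'$, and assume $\mathcal{N}(\mathscr{S},1)\cap\mathcal{M}=\{0\}$. Let $X\in\mathcal{N}(\mathscr{S},2)\cap\mathcal{M}\setminus\{0\}$ and $\delta\in(0,1)$. If $x\in\mathbb{R}^m$ has independent entries each with the symmetric Bernoulli distribution ($\Pr(x_i=1)=\Pr(x_i=-1)=1/2$), then $$\Pr\big(\|P_{\mathcal{C}(X)}x\|_2^2\ge(1-\delta)\|x\|_2^2\big)\le\exp\Big[-\tfrac{m(1-\delta)}{4}+\log4\Big].$$
   Context: For $j=1,\dots,q$ let $S_j$ be the unique matrix with $(S(x,y))_j=x^TS_jy$; the lifted operator is $(\mathscr{S}(W))_j=\operatorname{tr}(S_j^TW)$. $\mathcal{N}(\mathscr{S},k)=\{X:\operatorname{rank}(X)\le k,\ \mathscr{S}(X)=0\}$; $\mathcal{K}'-\mathcal{K}'=\{X_1-X_2:X_1,X_2\in\mathcal{K}'\}$. $\mathcal{C}(X)$ is the column space of $X$ and $P_{\mathcal{C}(X)}$ the orthogonal projection onto it. *)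

theory Defs
  imports "HOL-Analysis.Analysis" "HOL-Probability.Probability"
begin

text \<open>The matrix S_j with (S(x,y))_j = x^T S_j y (rows indexed by 'm, columns by 'n).\<close>
definition bilin_mat :: "(real^'m \<Rightarrow> real^'n \<Rightarrow> real^'q) \<Rightarrow> 'q \<Rightarrow> real^'n^'m" where
  "bilin_mat S j = (\<chi> i k. S (axis i 1) (axis k 1) $ j)"

definition lifted :: "(real^'m \<Rightarrow> real^'n \<Rightarrow> real^'q) \<Rightarrow> real^'n^'m \<Rightarrow> real^'q" where
  "lifted S W = (\<chi> j. trace (transpose (bilin_mat S j) ** W))"

definition null_rank :: "(real^'m \<Rightarrow> real^'n \<Rightarrow> real^'q) \<Rightarrow> nat \<Rightarrow> (real^'n^'m) set" where
  "null_rank S k = {X. rank X \<le> k \<and> lifted S X = 0}"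

definition set_diffs :: "(real^'n^'m) set \<Rightarrow> (real^'n^'m) set" where
  "set_diffs K = {X1 - X2 | X1 X2. X1 \<in> K \<and> X2 \<in> K}"

definition col_space :: "real^'n^'m \<Rightarrow> (real^'m) set" where
  "col_space X = span (columns X)"

definition orth_proj :: "(real^'m) set \<Rightarrow> real^'m \<Rightarrow> real^'m" where
  "orth_proj V x = (THE y. y \<in> V \<and> (\<forall>v\<in>V. (x - y) \<bullet> v = 0))"

text \<open>Rademacher vector: independent symmetric Bernoulli entries = uniform on the hypercube.\<close>
definition rademacher_vec :: "(real^'m) pmf" where
  "rademacher_vec = pmf_of_set {x. \<forall>i. x $ i \<in> {-1, 1}}"

end

theory Submission
  imports Defs
begin

(*
  Only the rank bound rank X <= 2 is used: the column space of X is then at most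
  two-dimensional, and for an orthonormal basis b1, b2 of it
  |P x|^2 = (b1 . x)^2 + (b2 . x)^2.  If this is at least (1 - delta) m = (1 - delta) |x|^2,
  one of the two squares is at least (1 - delta) m / 2.  For a unit vector u the sign
  vector x is sub-Gaussian along u, E exp (t (u . x)) <= exp (t^2 / 2), because
  cosh t <= exp (t^2 / 2); Chernoff then gives Pr ((u . x)^2 >= s) <= 2 exp (- s / 2),
  and a union bound over the two basis vectors yields 4 exp (- (1 - delta) m / 4).
*)

lemma cosh_le_exp_half_square: "cosh x \<le> exp (x\<^sup>2 / 2)" for x :: real
proof -
  have "cosh a \<le> exp (a\<^sup>2 / 2)" if "a \<ge> 0" for a :: real
  proof -
    have hoeffding: "-(2*a) * (1/2) + ln (1 + (1/2) * (exp (2*a) - 1)) \<le> (2*a)\<^sup>2 / 8"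
      using Hoeffdings_lemma_aux[of "2*a" "1/2"] that by simp
    have "1 + (1/2) * (exp (2*a) - 1) = exp a * cosh a"
      using exp_add[of a a] by (simp add: cosh_field_def field_simps exp_minus mult_2)
    then have "ln (1 + (1/2) * (exp (2*a) - 1)) = a + ln (cosh a)"
      by (simp add: ln_mult)
    with hoeffding have "ln (cosh a) \<le> a\<^sup>2 / 2"
      by (simp add: power2_eq_square)
    then show ?thesis
      by (metis cosh_real_pos exp_le_cancel_iff exp_ln)
  qed
  from this[of "\<bar>x\<bar>"] show ?thesis
    by simp
qed

definition sign_vectors :: "(real^'m) set" where
  "sign_vectors = {x. \<forall>i. x $ i \<in> {-1, 1}}"

lemma rademacher_vec_eq: "rademacher_vec = pmf_of_set sign_vectors"
  by (simp add: rademacher_vec_def sign_vectors_def)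

lemma sign_vectors_eq_image: "sign_vectors = vec_lambda ` (PiE UNIV (\<lambda>_. {-1, 1::real}))"
proof (rule set_eqI, rule iffI)
  fix x :: "real^'m"
  assume "x \<in> sign_vectors"
  then have "(\<lambda>i. x $ i) \<in> PiE UNIV (\<lambda>_. {-1, 1::real})"
    by (auto simp: sign_vectors_def)
  then show "x \<in> vec_lambda ` (PiE UNIV (\<lambda>_. {-1, 1::real}))"
    by (metis image_eqI vec_lambda_eta)
qed (auto simp: sign_vectors_def PiE_iff)

lemma inj_on_vec_lambda: "inj_on (vec_lambda :: ('m::finite \<Rightarrow> real) \<Rightarrow> real^'m) A"
  by (rule inj_onI) (metis vec_lambda_inverse UNIV_I)

lemma finite_sign_vectors: "finite (sign_vectors :: (real^'m) set)"
  unfolding sign_vectors_eq_image by (intro finite_imageI finite_PiE) auto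

lemma card_sign_vectors: "card (sign_vectors :: (real^'m) set) = 2 ^ CARD('m)"
  unfolding sign_vectors_eq_image card_image[OF inj_on_vec_lambda]
  by (simp add: card_PiE numeral_2_eq_2)

lemma sign_vectors_nonempty: "(sign_vectors :: (real^'m) set) \<noteq> {}"
  using card_sign_vectors[where 'm='m] by (metis card.empty power_not_zero zero_neq_numeral)

lemma norm_sign_vector:
  fixes x :: "real^'m"
  assumes "x \<in> sign_vectors"
  shows "(norm x)\<^sup>2 = real CARD('m)"
proof -
  have "x $ i * x $ i = 1" for i
  proof -
    have "x $ i = -1 \<or> x $ i = 1"
      using assms by (auto simp: sign_vectors_def)
    then show ?thesis
      by auto
  qed
  then show ?thesis
    unfolding power2_norm_eq_inner inner_vec_def by simp
qed

lemma prob_rademacher_vec: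
  "measure_pmf.prob rademacher_vec A = real (card (sign_vectors \<inter> A)) / 2 ^ CARD('m)"
  for A :: "(real^'m) set"
  unfolding rademacher_vec_eq
  by (simp add: measure_pmf_of_set[OF sign_vectors_nonempty finite_sign_vectors] card_sign_vectors)

lemma sum_sign_vectors_exp_inner:
  fixes u :: "real^'m"
  shows "(\<Sum>x\<in>sign_vectors. exp (t * (u \<bullet> x))) = (\<Prod>i\<in>UNIV. 2 * cosh (t * u $ i))"
proof -
  have "(\<Sum>x\<in>sign_vectors. exp (t * (u \<bullet> x))) =
        (\<Sum>g\<in>PiE UNIV (\<lambda>_. {-1, 1::real}). \<Prod>i\<in>UNIV. exp (t * u $ i * g i))"
    unfolding sign_vectors_eq_image sum.reindex[OF inj_on_vec_lambda]
    by (simp add: inner_vec_def exp_sum[symmetric] sum_distrib_left mult.assoc)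
  also have "\<dots> = (\<Prod>i\<in>UNIV. \<Sum>s\<in>{-1, 1::real}. exp (t * u $ i * s))"
    by (rule prod_sum_PiE[symmetric]) auto
  also have "\<dots> = (\<Prod>i\<in>UNIV. 2 * cosh (t * u $ i))"
    by (intro prod.cong refl) (simp add: cosh_field_def)
  finally show ?thesis .
qed

lemma sum_sign_vectors_exp_inner_le:
  fixes u :: "real^'m"
  shows "(\<Sum>x\<in>sign_vectors. exp (t * (u \<bullet> x))) \<le> 2 ^ CARD('m) * exp (t\<^sup>2 * (norm u)\<^sup>2 / 2)"
proof -
  have "(\<Prod>i\<in>UNIV. 2 * cosh (t * u $ i)) \<le> (\<Prod>i\<in>(UNIV::'m set). 2 * exp ((t * u $ i)\<^sup>2 / 2))"
    by (intro prod_mono) (simp add: cosh_le_exp_half_square)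
  also have "\<dots> = 2 ^ CARD('m) * exp (\<Sum>i\<in>UNIV. (t * u $ i)\<^sup>2 / 2)"
    by (simp add: prod.distrib exp_sum)
  also have "(norm u)\<^sup>2 = (\<Sum>i\<in>UNIV. (u $ i)\<^sup>2)"
    unfolding power2_norm_eq_inner inner_vec_def by (simp add: power2_eq_square)
  then have "(\<Sum>i\<in>UNIV. (t * u $ i)\<^sup>2 / 2) = t\<^sup>2 * (norm u)\<^sup>2 / 2"
    by (simp add: power_mult_distrib sum_distrib_left sum_divide_distrib)
  finally show ?thesis
    by (simp add: sum_sign_vectors_exp_inner)
qed

lemma prob_rademacher_inner_ge:
  fixes u :: "real^'m"
  assumes "norm u \<le> 1" "t \<ge> 0"
  shows "measure_pmf.prob rademacher_vec {x. t \<le> u \<bullet> x} \<le> exp (- t\<^sup>2 / 2)"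
proof -
  let ?A = "sign_vectors \<inter> {x. t \<le> u \<bullet> x}"
  text \<open>Chernoff: the indicator of \<open>t \<le> u \<bullet> x\<close> is bounded by \<open>exp (t (u \<bullet> x) - t\<^sup>2)\<close>.\<close>
  have "real (card ?A) = (\<Sum>x\<in>?A. 1)"
    by simp
  also have "\<dots> \<le> (\<Sum>x\<in>?A. exp (t * (u \<bullet> x) - t\<^sup>2))"
  proof (rule sum_mono)
    fix x
    assume "x \<in> ?A"
    then show "1 \<le> exp (t * (u \<bullet> x) - t\<^sup>2)"
      using assms(2) mult_left_mono[of t "u \<bullet> x" t] by (simp add: power2_eq_square)
  qed
  also have "\<dots> \<le> (\<Sum>x\<in>sign_vectors. exp (t * (u \<bullet> x))) * exp (- t\<^sup>2)"
    by (simp add: sum_distrib_right exp_diff exp_minus divide_inverse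
        sum_mono2[OF finite_sign_vectors])
  also have "\<dots> \<le> 2 ^ CARD('m) * exp (t\<^sup>2 * (norm u)\<^sup>2 / 2) * exp (- t\<^sup>2)"
    by (rule mult_right_mono[OF sum_sign_vectors_exp_inner_le]) simp
  also have "\<dots> \<le> 2 ^ CARD('m) * exp (t\<^sup>2 / 2) * exp (- t\<^sup>2)"
    using assms(1) mult_left_le[of "(norm u)\<^sup>2" "t\<^sup>2"] by (simp add: power_le_one)
  also have "\<dots> = 2 ^ CARD('m) * exp (- t\<^sup>2 / 2)"
    by (simp add: mult.assoc exp_add[symmetric])
  finally show ?thesis
    by (simp add: prob_rademacher_vec divide_le_eq mult.commute)
qed

lemma prob_rademacher_inner_square_ge:
  fixes u :: "real^'m"
  assumes "norm u \<le> 1" "s \<ge> 0"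
  shows "measure_pmf.prob rademacher_vec {x. s \<le> (u \<bullet> x)\<^sup>2} \<le> 2 * exp (- s / 2)"
proof -
  let ?t = "sqrt s"
  have "{x. s \<le> (u \<bullet> x)\<^sup>2} \<subseteq> {x. ?t \<le> u \<bullet> x} \<union> {x. ?t \<le> (-u) \<bullet> x}"
    using real_sqrt_le_mono[of s "(u \<bullet> _)\<^sup>2"] by (fastforce simp: abs_if split: if_splits)
  then have "measure_pmf.prob rademacher_vec {x. s \<le> (u \<bullet> x)\<^sup>2}
      \<le> measure_pmf.prob rademacher_vec {x. ?t \<le> u \<bullet> x}
        + measure_pmf.prob rademacher_vec {x. ?t \<le> (-u) \<bullet> x}"
    using measure_pmf.finite_measure_mono measure_Un_le[of _ "measure_pmf rademacher_vec"]
    by (metis (no_types, lifting) order_trans sets_measure_pmf UNIV_I)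
  also have "\<dots> \<le> exp (- ?t\<^sup>2 / 2) + exp (- ?t\<^sup>2 / 2)"
    by (intro add_mono prob_rademacher_inner_ge) (use assms in auto)
  finally show ?thesis
    using assms(2) by simp
qed

lemma orth_proj_span_orthonormal:
  fixes B :: "(real^'m) set"
  assumes "finite B" and "pairwise orthogonal B" and "\<And>b. b \<in> B \<Longrightarrow> norm b = 1"
  shows "orth_proj (span B) x = (\<Sum>b\<in>B. (b \<bullet> x) *\<^sub>R b)"
proof -
  define y where "y = (\<Sum>b\<in>B. (b \<bullet> x) *\<^sub>R b)"
  have y_span: "y \<in> span B"
    unfolding y_def by (intro span_sum span_mul span_base)
  have "(x - y) \<bullet> b = 0" if "b \<in> B" for b
  proof -
    have "y \<bullet> b = (\<Sum>b'\<in>B. (b' \<bullet> x) * (b' \<bullet> b))"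
      unfolding y_def by (simp add: inner_sum_left)
    also have "\<dots> = (b \<bullet> x) * (b \<bullet> b)"
      using assms(1,2) that
      by (simp add: sum.remove[of B b] sum.neutral pairwise_def orthogonal_def inner_commute)
    finally show ?thesis
      using assms(3)[OF that]
      by (simp add: inner_diff_left inner_diff_right inner_commute dot_square_norm)
  qed
  then have y_orth: "(x - y) \<bullet> v = 0" if "v \<in> span B" for v
    using orthogonal_to_span[OF that, of "x - y"] by (simp add: orthogonal_def)
  show ?thesis
    unfolding y_def[symmetric] orth_proj_def
  proof (rule the_equality)
    show "y \<in> span B \<and> (\<forall>v\<in>span B. (x - y) \<bullet> v = 0)"
      using y_span y_orth by blast
  next
    fix z
    assume z: "z \<in> span B \<and> (\<forall>v\<in>span B. (x - z) \<bullet> v = 0)"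
    then have "y - z \<in> span B"
      using y_span by (simp add: span_diff)
    then have "(y - z) \<bullet> (y - z) = (x - z) \<bullet> (y - z) - (x - y) \<bullet> (y - z)"
      by (simp add: inner_diff_left)
    also have "\<dots> = 0"
      using z y_orth \<open>y - z \<in> span B\<close> by simp
    finally show "z = y"
      by simp
  qed
qed

lemma norm_orth_proj_span_orthonormal:
  fixes B :: "(real^'m) set"
  assumes "finite B" and "pairwise orthogonal B" and "\<And>b. b \<in> B \<Longrightarrow> norm b = 1"
  shows "(norm (orth_proj (span B) x))\<^sup>2 = (\<Sum>b\<in>B. (b \<bullet> x)\<^sup>2)"
proof -
  have "(norm (\<Sum>b\<in>B. (b \<bullet> x) *\<^sub>R b))\<^sup>2 = (\<Sum>b\<in>B. (norm ((b \<bullet> x) *\<^sub>R b))\<^sup>2)"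
    using assms(2) by (intro norm_sum_Pythagorean[OF assms(1)])
      (auto simp: pairwise_def orthogonal_clauses)
  then show ?thesis
    by (simp add: orth_proj_span_orthonormal[OF assms] assms(3) power_mult_distrib)
qed

lemma exists_ge_div_of_sum_ge:
  fixes f :: "'a \<Rightarrow> real"
  assumes "finite B" "card B \<le> d" "0 < s" "s \<le> (\<Sum>b\<in>B. f b)"
  shows "\<exists>b\<in>B. s / d \<le> f b"
proof (rule ccontr)
  assume "\<not> ?thesis"
  then have less: "f b < s / d" if "b \<in> B" for b
    using that by auto
  have "B \<noteq> {}"
    using assms(3,4) by auto
  then have "(\<Sum>b\<in>B. f b) < card B * (s / d)"
    using sum_strict_mono[OF assms(1) _ less] by simp
  also have "\<dots> \<le> d * (s / d)"
    using assms(2,3) by (intro mult_right_mono) auto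
  also have "\<dots> = s"
    using assms(1,2) \<open>B \<noteq> {}\<close> card_gt_0_iff[of B] by simp
  finally show False
    using assms(4) by simp
qed

lemma prob_rademacher_norm_orth_proj_ge:
  fixes V :: "(real^'m) set"
  assumes "subspace V" "dim V \<le> d" "0 < d" "0 < s"
  shows "measure_pmf.prob rademacher_vec {x. s \<le> (norm (orth_proj V x))\<^sup>2}
           \<le> 2 * d * exp (- s / (2 * d))"
proof -
  obtain B where B: "pairwise orthogonal B" "\<And>b. b \<in> B \<Longrightarrow> norm b = 1"
      "independent B" "card B = dim V" "span B = V"
    using orthonormal_basis_subspace[OF assms(1)] by metis
  have "finite B"
    using B(3) independent_imp_finite by blast
  let ?tail = "\<lambda>b. {x. s / d \<le> (b \<bullet> x)\<^sup>2}"
  have "{x. s \<le> (norm (orth_proj V x))\<^sup>2} \<subseteq> (\<Union>b\<in>B. ?tail b)"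
    using exists_ge_div_of_sum_ge[OF \<open>finite B\<close> _ assms(4)] assms(2) B
      norm_orth_proj_span_orthonormal[OF \<open>finite B\<close> B(1,2)] by fastforce
  then have "measure_pmf.prob rademacher_vec {x. s \<le> (norm (orth_proj V x))\<^sup>2}
      \<le> (\<Sum>b\<in>B. measure_pmf.prob rademacher_vec (?tail b))"
    using measure_pmf.finite_measure_subadditive_finite[OF \<open>finite B\<close>, of ?tail]
      measure_pmf.finite_measure_mono by (fastforce intro: order_trans)
  also have "\<dots> \<le> (\<Sum>b\<in>B. 2 * exp (- (s / d) / 2))"
    using B(2) assms(3,4) by (intro sum_mono prob_rademacher_inner_square_ge) auto
  also have "\<dots> \<le> d * (2 * exp (- s / (2 * d)))"
    using B(4) assms(2) by (simp add: mult_right_mono mult.commute)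
  finally show ?thesis
    by simp
qed

theorem lemma4:
  fixes S :: "real^'m \<Rightarrow> real^'n \<Rightarrow> real^'q"
    and K' :: "(real^'n^'m) set"
    and X :: "real^'n^'m"
    and \<delta> :: real
  assumes "bilinear S"
    and "null_rank S 1 \<inter> set_diffs K' = {0}"
    and "X \<in> null_rank S 2 \<inter> set_diffs K' - {0}"
    and "0 < \<delta>" and "\<delta> < 1"
  shows "measure_pmf.prob rademacher_vec
           {x. (norm (orth_proj (col_space X) x))\<^sup>2 \<ge> (1 - \<delta>) * (norm x)\<^sup>2}
         \<le> exp (- (real CARD('m) * (1 - \<delta>) / 4) + ln 4)"
proof -
  define s where "s = (1 - \<delta>) * real CARD('m)"
  have "rank X \<le> 2"
    using assms(3) by (simp add: null_rank_def)
  then have "dim (col_space X) \<le> 2"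
    by (simp add: col_space_def column_rank_def)
  have "measure_pmf.prob rademacher_vec
          {x. (norm (orth_proj (col_space X) x))\<^sup>2 \<ge> (1 - \<delta>) * (norm x)\<^sup>2}
      = measure_pmf.prob rademacher_vec {x. s \<le> (norm (orth_proj (col_space X) x))\<^sup>2}"
    unfolding prob_rademacher_vec s_def
    by (intro arg_cong[where f = "\<lambda>A. real (card A) / 2 ^ CARD('m)"])
      (auto simp: norm_sign_vector)
  also have "\<dots> \<le> 2 * 2 * exp (- s / (2 * 2))"
    using prob_rademacher_norm_orth_proj_ge[of "col_space X" 2 s]
      \<open>dim (col_space X) \<le> 2\<close> assms(5) by (simp add: col_space_def s_def)
  also have "\<dots> = exp (- (real CARD('m) * (1 - \<delta>) / 4) + ln 4)"
    unfolding exp_add by (simp add: s_def mult.commute)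
  finally show ?thesis .
qed

end
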